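(* Let $\mathbb{B}$ be the open unit ball centered at the origin in $\mathbb{H}$ and let $F:\mathbb{B}\to M_n(\mathbb{H})$ be a quaternionic matrix-valued regular function. If $q\mapsto\Vert F(q)\Vert$ attains its maximum at some point of $\mathbb{B}$, then $\Vert F(q)\Vert$ is constant on $\mathbb{B}$.
   Context: $\mathbb{H}$ denotes the real quaternions. A function $f:\mathbb{B}\to\mathbb{H}$ is (left) regular if it has a power series representation $f(q)=\sum_{n\ge0}q^n f_n$ with $f_n\in\mathbb{H}$ convergent on $\mathbb{B}$ (equivalently, for each imaginary unit $I$ with $I^2=-1$, its restriction to $\mathbb{B}\cap(\mathbb{R}+\mathbb{R}I)$ is holomorphic in the sense $\frac12(\partial_x+I\partial_y)f(x+yI)=0$). $F:\mathbb{B}\to M_n(\mathbb{H})$ is regular if each entry is regular. $\Vert A\Vert=\sup_{x\neq0}\Vert Ax\Vert_2/\Vert x\Vert_2$ is the operator norm of $A\in M_n(\mathbb{H})$ acting on $\mathbb{H}^n$ with the Euclidean norm $\Vert x\Vert_2=(x^*x)^{1/2}$. *)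

theory Defs
  imports "HOL-Analysis.Analysis"
begin

text \<open>The product-type norm is the Euclidean norm on R^4, i.e. the quaternion modulus;
  addition, scaling, limits and series are those of R^4.\<close>

type_synonym quat = "real \<times> real \<times> real \<times> real"

definition qmult :: "quat \<Rightarrow> quat \<Rightarrow> quat" where
  "qmult p q = (case p of (a1, b1, c1, d1) \<Rightarrow> case q of (a2, b2, c2, d2) \<Rightarrow>
     (a1*a2 - b1*b2 - c1*c2 - d1*d2,
      a1*b2 + b1*a2 + c1*d2 - d1*c2,
      a1*c2 - b1*d2 + c1*a2 + d1*b2,
      a1*d2 + b1*c2 - c1*b2 + d1*a2))"

definition qone :: quat where "qone = (1, 0, 0, 0)"

primrec qpow :: "quat \<Rightarrow> nat \<Rightarrow> quat" where
  "qpow q 0 = qone"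
| "qpow q (Suc n) = qmult (qpow q n) q"

definition qball :: "quat set" where "qball = {q. norm q < 1}"

definition regular :: "(quat \<Rightarrow> quat) \<Rightarrow> bool" where
  "regular f \<longleftrightarrow> (\<exists>c :: nat \<Rightarrow> quat. \<forall>q \<in> qball. (\<lambda>n. qmult (qpow q n) (c n)) sums f q)"

text \<open>Matrices in M_n(H) with rows/columns indexed by a finite type 'n (n = CARD('n)).\<close>
type_synonym 'n qmat = "'n \<Rightarrow> 'n \<Rightarrow> quat"

definition regular_mat :: "(quat \<Rightarrow> 'n::finite qmat) \<Rightarrow> bool" where
  "regular_mat F \<longleftrightarrow> (\<forall>i j. regular (\<lambda>q. F q i j))"

definition qmat_vec :: "'n::finite qmat \<Rightarrow> ('n \<Rightarrow> quat) \<Rightarrow> ('n \<Rightarrow> quat)" where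
  "qmat_vec A x = (\<lambda>i. \<Sum>j\<in>UNIV. qmult (A i j) (x j))"

definition qvec_norm :: "('n::finite \<Rightarrow> quat) \<Rightarrow> real" where
  "qvec_norm x = sqrt (\<Sum>i\<in>UNIV. (norm (x i))\<^sup>2)"

definition qop_norm :: "'n::finite qmat \<Rightarrow> real" where
  "qop_norm A = (SUP x \<in> {x. x \<noteq> (\<lambda>_. 0)}. qvec_norm (qmat_vec A x) / qvec_norm x)"

end

theory Submission
  imports Defs "HOL-Complex_Analysis.Conformal_Mappings"
begin

text \<open>Through every point of the ball passes a slice \<open>\<real> + \<real>I\<close>, \<open>I\<close> an imaginary unit, which is an
  isometric copy of the complex unit disc on which left multiplication by the slice variable acts
  as complex multiplication. Let \<open>\<parallel>F\<parallel>\<close> be maximal, equal to \<open>M > 0\<close>, at \<open>q\<^sub>0\<close>, pick a unit vector \<open>v\<close> with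
  \<open>\<parallel>F(q\<^sub>0)v\<parallel> = M\<close> and put \<open>w = F(q\<^sub>0)v/M\<close>. Then \<open>\<phi>(q) = \<langle>w, F(q)v\<rangle> \<le> \<parallel>F(q)\<parallel> \<le> M\<close> with equality
  at \<open>q\<^sub>0\<close>, and on the slice through \<open>q\<^sub>0\<close> the function \<open>\<phi>\<close> is the real part of a holomorphic function,
  so by the maximum principle \<open>\<phi>\<close>, hence \<open>\<parallel>F\<parallel>\<close>, is constant there. As \<open>0\<close> lies on every slice, it is
  a maximum point too, and the same argument applied to all slices through \<open>0\<close> covers the ball.\<close>

lemma bounded_bilinear_qmult: "bounded_bilinear qmult"
  unfolding bilinear_conv_bounded_bilinear[symmetric] bilinear_def
  by (auto intro!: linearI simp: qmult_def split: prod.splits simp: algebra_simps)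

interpretation qmult: bounded_bilinear qmult
  by (rule bounded_bilinear_qmult)

lemma qmult_qone_left [simp]: "qmult qone p = p"
  by (cases p) (simp add: qmult_def qone_def)

lemma qmult_qone_right [simp]: "qmult p qone = p"
  by (cases p) (simp add: qmult_def qone_def)

lemma norm_real_triple: "norm ((b, c, d) :: real \<times> real \<times> real) = sqrt (b\<^sup>2 + c\<^sup>2 + d\<^sup>2)"
  by (simp add: norm_Pair add.assoc)

lemma qmult_imag_twice: "qmult (0, b, c, d) (qmult (0, b, c, d) p) = - ((b\<^sup>2 + c\<^sup>2 + d\<^sup>2) *\<^sub>R p)"
  by (cases p) (simp add: qmult_def algebra_simps power2_eq_square)

lemma qmult_imag_unit_twice: "norm u = 1 \<Longrightarrow> qmult (0, u) (qmult (0, u) p) = - p"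
  by (cases u) (simp add: qmult_imag_twice norm_real_triple)

definition slice :: "real \<times> real \<times> real \<Rightarrow> complex \<Rightarrow> quat" where
  "slice u z = Re z *\<^sub>R qone + Im z *\<^sub>R (0, u)"

lemma slice_Pair: "slice u z = (Re z, Im z *\<^sub>R u)"
  by (simp add: slice_def qone_def zero_prod_def)

lemma slice_0 [simp]: "slice u 0 = 0"
  by (simp add: slice_Pair zero_prod_def)

lemma norm_slice: "norm u = 1 \<Longrightarrow> norm (slice u z) = cmod z"
  by (simp add: slice_Pair norm_Pair cmod_def)

lemma slice_in_qball_iff: "norm u = 1 \<Longrightarrow> slice u z \<in> qball \<longleftrightarrow> z \<in> ball 0 1"
  by (simp add: qball_def norm_slice)

lemma qmult_slice_left: "qmult (slice u z) p = Re z *\<^sub>R p + Im z *\<^sub>R qmult (0, u) p"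
  unfolding slice_def qmult.add_left qmult.scaleR_left by simp

lemma qmult_slice:
  assumes "norm u = 1"
  shows "qmult (slice u z) (slice u w) = slice u (z * w)"
proof -
  have "qmult (0, u) (0, u) = - qone"
    using qmult_imag_unit_twice[OF assms, of qone] by simp
  then have unit_slice: "qmult (0, u) (slice u w) = Re w *\<^sub>R (0, u) - Im w *\<^sub>R qone"
    unfolding slice_def qmult.add_right qmult.scaleR_right by simp
  have "qmult (slice u z) (slice u w)
      = Re z *\<^sub>R (Re w *\<^sub>R qone + Im w *\<^sub>R (0, u)) + Im z *\<^sub>R (Re w *\<^sub>R (0, u) - Im w *\<^sub>R qone)"
    unfolding qmult_slice_left unit_slice by (simp only: slice_def)
  also have "\<dots> = slice u (z * w)"
    unfolding slice_def by (simp add: algebra_simps del: scaleR_Pair)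
  finally show ?thesis .
qed

lemma slice_1 [simp]: "slice u 1 = qone"
  by (simp add: slice_def zero_prod_def)

lemma qpow_slice: "norm u = 1 \<Longrightarrow> qpow (slice u z) n = slice u (z ^ n)"
  by (induction n) (simp_all add: qmult_slice mult.commute)

lemma slice_surj: "\<exists>u z. norm u = 1 \<and> q = slice u z"
proof -
  obtain a w where q: "q = (a, w)" by (cases q) auto
  obtain u where u: "norm u = 1" "w = norm w *\<^sub>R u"
  proof (cases "w = 0")
    case True
    then show thesis
      by (intro that[of "(1, 0, 0)"]) (simp_all add: norm_real_triple zero_prod_def)
  next
    case False
    then show thesis
      by (intro that[of "w /\<^sub>R norm w"]) simp_all
  qed
  then have "q = slice u (Complex a (norm w))"
    by (simp add: q slice_Pair)
  with u show ?thesis by blast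
qed

text \<open>The functional that is complex linear for the left action of the slice through \<open>(0, u)\<close> and
  has real part \<open>T\<close>; it turns the restriction of a power series \<open>\<Sum> q\<^sup>n f\<^sub>n\<close> to the slice into the
  complex power series \<open>\<Sum> z\<^sup>n complexify T u f\<^sub>n\<close>.\<close>
definition complexify :: "(quat \<Rightarrow> real) \<Rightarrow> real \<times> real \<times> real \<Rightarrow> quat \<Rightarrow> complex" where
  "complexify T u p = Complex (T p) (- T (qmult (0, u) p))"

lemma Re_complexify [simp]: "Re (complexify T u p) = T p"
  by (simp add: complexify_def)

lemma complexify_qmult_slice:
  assumes T: "linear T" and u: "norm u = 1"
  shows "complexify T u (qmult (slice u z) p) = z * complexify T u p"
proof -
  interpret T: linear T by fact
  have rotate: "qmult (0, u) (Re z *\<^sub>R p + Im z *\<^sub>R qmult (0, u) p) = Re z *\<^sub>R qmult (0, u) p - Im z *\<^sub>R p"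
    by (simp add: qmult.add_right qmult.scaleR_right qmult_imag_unit_twice[OF u])
  show ?thesis
    unfolding complexify_def qmult_slice_left rotate
    by (simp add: T.add T.scale T.diff complex_eq_iff algebra_simps)
qed

lemma complexify_sums:
  assumes "bounded_linear T" and "f sums s"
  shows "(\<lambda>n. complexify T u (f n)) sums complexify T u s"
proof -
  have "bounded_linear (\<lambda>p. T (qmult (0, u) p))"
    using assms(1) qmult.bounded_linear_right by (rule bounded_linear_compose)
  then show ?thesis
    using sums_minus[OF bounded_linear.sums[OF _ assms(2)]] bounded_linear.sums[OF assms]
    unfolding complexify_def sums_complex_iff by simp
qed

lemma regular_slice_holomorphic:
  assumes f: "regular f" and T: "bounded_linear T" and u: "norm u = 1"
  shows "(\<lambda>z. complexify T u (f (slice u z))) holomorphic_on ball 0 1"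
proof -
  obtain c where c: "\<And>q. q \<in> qball \<Longrightarrow> (\<lambda>n. qmult (qpow q n) (c n)) sums f q"
    using f unfolding regular_def by blast
  define a where "a n = complexify T u (c n)" for n
  have sums: "(\<lambda>n. a n * z ^ n) sums complexify T u (f (slice u z))" if "cmod z < 1" for z
  proof -
    have "slice u z \<in> qball"
      using that by (simp add: slice_in_qball_iff[OF u])
    from complexify_sums[OF T c[OF this], of u] show ?thesis
      by (simp add: a_def qpow_slice[OF u] complexify_qmult_slice[OF bounded_linear.linear[OF T] u]
          mult.commute)
  qed
  have "(\<lambda>z. \<Sum>n. a n * z ^ n) holomorphic_on ball 0 1"
  proof (rule holomorphic_onI)
    fix z :: complex assume "z \<in> ball 0 1"
    have "((\<lambda>z. \<Sum>n. a n * z ^ n) has_field_derivative (\<Sum>n. diffs a n * z ^ n)) (at z)"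
      using \<open>z \<in> ball 0 1\<close> sums_summable[OF sums]
      by (intro termdiffs_strong'[where K = 1]) auto
    then show "(\<lambda>z. \<Sum>n. a n * z ^ n) field_differentiable at z within ball 0 1"
      using field_differentiable_at_within field_differentiable_def by blast
  qed
  then show ?thesis
    by (rule holomorphic_transform) (use sums in \<open>simp add: sums_iff\<close>)
qed

lemma Re_holomorphic_maximum_principle:
  assumes H: "H holomorphic_on S" and "open S" "connected S" "z0 \<in> S"
    and max: "\<And>z. z \<in> S \<Longrightarrow> Re (H z) \<le> Re (H z0)"
    and "z \<in> S"
  shows "Re (H z) = Re (H z0)"
proof -
  have "(\<lambda>z. exp (H z)) constant_on S"
    using assms by (intro maximum_modulus_principle[of _ S S z0]) (auto intro!: holomorphic_intros)
  then have "exp (H z) = exp (H z0)"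
    using \<open>z \<in> S\<close> \<open>z0 \<in> S\<close> unfolding constant_on_def by metis
  then have "norm (exp (H z)) = norm (exp (H z0))"
    by (rule arg_cong)
  then show ?thesis
    by simp
qed

lemma onorm_attained:
  fixes f :: "'a::euclidean_space \<Rightarrow> 'b::real_normed_vector"
  assumes f: "bounded_linear f"
  obtains v where "norm v = 1" "norm (f v) = onorm f"
proof -
  interpret f: bounded_linear f by fact
  have "sphere (0::'a) 1 \<noteq> {}"
    using vector_choose_size[of 1] by auto
  moreover have "continuous_on (sphere 0 1) (\<lambda>x. norm (f x))"
    by (intro continuous_intros f.continuous_on continuous_on_id)
  ultimately obtain v where v: "norm v = 1" and max: "\<And>x. norm x = 1 \<Longrightarrow> norm (f x) \<le> norm (f v)"
    using continuous_attains_sup[OF compact_sphere] by (metis mem_sphere_0)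
  have "norm (f x) \<le> norm (f v) * norm x" for x
  proof (cases "x = 0")
    case False
    then have "norm (f (x /\<^sub>R norm x)) \<le> norm (f v)"
      by (intro max) simp
    with False show ?thesis
      by (simp add: f.scaleR field_simps)
  qed (simp add: f.zero)
  then have "onorm f \<le> norm (f v)"
    by (rule onorm_le)
  moreover have "norm (f v) \<le> onorm f"
    using onorm[OF f, of v] v by simp
  ultimately show thesis
    using that v by simp
qed

definition qmat_op :: "'n::finite qmat \<Rightarrow> quat ^ 'n \<Rightarrow> quat ^ 'n" where
  "qmat_op A v = (\<chi> i. \<Sum>j\<in>UNIV. qmult (A i j) (v $ j))"

lemma bounded_linear_qmat_op: "bounded_linear (qmat_op A)"
  unfolding linear_conv_bounded_linear[symmetric]
  by (rule linearI)
    (simp_all add: qmat_op_def vec_eq_iff qmult.add_right qmult.scaleR_right sum.distrib scaleR_sum_right)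

lemma qop_norm_eq_onorm: "qop_norm A = onorm (qmat_op A)"
proof -
  have ratio: "qvec_norm (qmat_vec A x) / qvec_norm x = norm (qmat_op A (vec_lambda x)) / norm (vec_lambda x)" for x
    by (simp add: qvec_norm_def qmat_vec_def qmat_op_def norm_vec_def L2_set_def)
  obtain v where v: "norm v = 1" "norm (qmat_op A v) = onorm (qmat_op A)"
    using onorm_attained[OF bounded_linear_qmat_op] .
  show ?thesis
    unfolding qop_norm_def
  proof (rule cSup_eq_maximum)
    have "vec_nth v \<noteq> (\<lambda>_. 0)"
      using v(1) by (metis norm_zero vec_nth_inverse zero_neq_one zero_vec_def)
    then show "onorm (qmat_op A) \<in> (\<lambda>x. qvec_norm (qmat_vec A x) / qvec_norm x) ` {x. x \<noteq> (\<lambda>_. 0)}"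
      using ratio[of "vec_nth v"] v by (force simp: vec_nth_inverse)
  qed (auto simp: ratio le_onorm[OF bounded_linear_qmat_op])
qed

lemma inner_qmat_op:
  "inner w (qmat_op A v) = (\<Sum>i\<in>UNIV. \<Sum>j\<in>UNIV. inner (w $ i) (qmult (A i j) (v $ j)))"
  by (simp add: qmat_op_def inner_vec_def inner_sum_right)

lemma inner_qmat_op_slice_is_Re_holomorphic:
  assumes "regular_mat F" and u: "norm u = 1"
  obtains H where "H holomorphic_on ball 0 1"
    and "\<And>z. Re (H z) = inner w (qmat_op (F (slice u z)) v)"
proof
  define T where "T i j p = inner (w $ i) (qmult p (v $ j))" for i j p
  have "bounded_linear (T i j)" for i j
    unfolding T_def using bounded_linear_inner_right qmult.bounded_linear_left
    by (rule bounded_linear_compose)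
  then show "(\<lambda>z. \<Sum>i\<in>UNIV. \<Sum>j\<in>UNIV. complexify (T i j) u (F (slice u z) i j)) holomorphic_on ball 0 1"
    using assms unfolding regular_mat_def
    by (intro holomorphic_on_sum regular_slice_holomorphic) auto
  show "Re (\<Sum>i\<in>UNIV. \<Sum>j\<in>UNIV. complexify (T i j) u (F (slice u z) i j)) = inner w (qmat_op (F (slice u z)) v)" for z
    by (simp add: T_def inner_qmat_op)
qed

lemma qop_norm_max_imp_constant_on_slice:
  fixes F :: "quat \<Rightarrow> 'n::finite qmat"
  assumes F: "regular_mat F" and u: "norm u = 1" and z0: "z0 \<in> ball 0 1"
    and max: "\<And>q. q \<in> qball \<Longrightarrow> qop_norm (F q) \<le> qop_norm (F (slice u z0))"
    and z: "z \<in> ball 0 1"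
  shows "qop_norm (F (slice u z)) = qop_norm (F (slice u z0))"
proof -
  define A where "A z = qmat_op (F (slice u z))" for z
  define M where "M = onorm (A z0)"
  have norm_F: "qop_norm (F (slice u y)) = onorm (A y)" for y
    by (simp add: A_def qop_norm_eq_onorm)
  have A_le: "norm (A y x) \<le> onorm (A y) * norm x" for y x
    unfolding A_def by (rule onorm[OF bounded_linear_qmat_op])
  have max_slice: "onorm (A y) \<le> M" if "y \<in> ball 0 1" for y
    using max[of "slice u y"] that by (simp add: slice_in_qball_iff[OF u] norm_F M_def)
  have "0 \<le> onorm (A z)"
    unfolding A_def by (rule onorm_pos_le[OF bounded_linear_qmat_op])
  moreover have "M \<le> onorm (A z)" if "M \<noteq> 0"
  proof -
    obtain v where v: "norm v = 1" "norm (A z0 v) = M"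
      using onorm_attained[OF bounded_linear_qmat_op] unfolding A_def M_def by metis
    define w where "w = A z0 v /\<^sub>R M"
    have w: "norm w = 1"
      using \<open>M \<noteq> 0\<close> by (simp add: w_def flip: v(2))
    have inner_le: "inner w (A y v) \<le> onorm (A y)" for y
    proof -
      have "inner w (A y v) \<le> norm w * norm (A y v)"
        by (rule norm_cauchy_schwarz)
      also have "\<dots> \<le> onorm (A y)"
        using A_le[of y v] by (simp add: v w)
      finally show ?thesis .
    qed
    have inner_z0: "inner w (A z0 v) = M"
      using \<open>M \<noteq> 0\<close> by (simp add: w_def dot_square_norm power2_eq_square flip: v(2))
    obtain H where H: "H holomorphic_on ball 0 1" and Re_H: "\<And>y. Re (H y) = inner w (A y v)"
      using inner_qmat_op_slice_is_Re_holomorphic[OF F u] unfolding A_def by metis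
    have "Re (H z) = Re (H z0)"
    proof (rule Re_holomorphic_maximum_principle[OF H open_ball connected_ball z0 _ z])
      show "Re (H y) \<le> Re (H z0)" if "y \<in> ball 0 1" for y
        using inner_le[of y] max_slice[OF that] by (simp add: Re_H inner_z0)
    qed
    then show ?thesis
      using inner_le[of z] by (simp add: Re_H inner_z0)
  qed
  ultimately show ?thesis
    using max_slice[OF z] by (fastforce simp: norm_F M_def)
qed

theorem theorem3p3:
  fixes F :: "quat \<Rightarrow> 'n::finite qmat"
  assumes "regular_mat F"
    and "\<exists>q0 \<in> qball. \<forall>q \<in> qball. qop_norm (F q) \<le> qop_norm (F q0)"
  shows "\<exists>c. \<forall>q \<in> qball. qop_norm (F q) = c"
proof -
  obtain q0 where "q0 \<in> qball" and max: "\<And>q. q \<in> qball \<Longrightarrow> qop_norm (F q) \<le> qop_norm (F q0)"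
    using assms(2) by blast
  moreover obtain u0 z0 where u0: "norm u0 = 1" and "q0 = slice u0 z0"
    using slice_surj by blast
  ultimately have "qop_norm (F 0) = qop_norm (F q0)"
    using qop_norm_max_imp_constant_on_slice[OF assms(1) u0, of z0 0] slice_in_qball_iff[OF u0] by simp
  with max have max0: "\<And>q. q \<in> qball \<Longrightarrow> qop_norm (F q) \<le> qop_norm (F (slice u 0))" for u
    by simp
  have "qop_norm (F q) = qop_norm (F 0)" if "q \<in> qball" for q
  proof -
    obtain u z where u: "norm u = 1" and q: "q = slice u z"
      using slice_surj by blast
    then show ?thesis
      using qop_norm_max_imp_constant_on_slice[OF assms(1) u _ max0, of z] slice_in_qball_iff[OF u] \<open>q \<in> qball\<close>
      by simp
  qed
  then show ?thesis
    by blast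
qed

end
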